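(* Define $\widetilde\Pi_h:L^2(I)\to\mathcal S^{2,0}_0(\mathcal T_h)$ by $$\widetilde\Pi_h v=\sum_{z\in\mathcal N_2(\mathcal T_h)\setminus\{a,b\}}\frac{(v,\varphi_{z})}{\beta_{z}}\varphi_{z},\qquad \beta_z=\int_I\varphi_z\,dx,$$ where $\{\varphi_z\}_{z\in\mathcal N_2(\mathcal T_h)}$ is the nodal (Lagrange) basis of $\mathcal S^{2,0}(\mathcal T_h)$, $\varphi_z(y)=\delta_{zy}$ for $y\in\mathcal N_2(\mathcal T_h)$. (It satisfies $(\widetilde\Pi_hv,w_h)_{h,2}=(v,w_h)$ for all $w_h\in\mathcal S^{2,0}_0(\mathcal T_h)$, $v\in L^2(I)$.) Then there is $c>0$ independent of $h$ such that $$\|\widetilde\Pi_hv\|_{H^1(I)}\le c\|v\|_{H^1(I)}\quad\text{for all }v\in H^1_0(I).$$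
   Context: Mesh notation: $I=(a,b)\subset\mathbb R$, $a=x_0<x_1<\dots<x_M=b$, $I_i=[x_{i-1},x_i]$, $h_i=x_i-x_{i-1}$, $h=\max_i h_i$, $\mathcal T_h=\{I_1,\dots,I_M\}$. The meshes are quasi-uniform: there is $c>0$ independent of $h$ with $h\le c\,h_i$ for all $i$. Let $m_i=(x_{i-1}+x_i)/2$, $\mathcal N_1(\mathcal T_h)=\{x_0,\dots,x_M\}$, $\mathcal N_2(\mathcal T_h)=\mathcal N_1(\mathcal T_h)\cup\{m_1,\dots,m_M\}$. For $k\ge1$, $l\in\{0,1\}$, $\mathcal S^{k,l}(\mathcal T_h)=\{v\in C^l(\bar I): v|_{I_i}\in\mathcal P_k\ \forall i\}$; $\mathcal S^{2,0}_0(\mathcal T_h)=\{\mu\in\mathcal S^{2,0}(\mathcal T_h):\mu(a)=\mu(b)=0\}$. $\mathcal I_{h,2}$ is the nodal interpolant into $\mathcal S^{2,0}(\mathcal T_h)$ at $\mathcal N_2(\mathcal T_h)$. $(\cdot,\cdot)$ is the $L^2(I)$ inner product, $(u,v)_{h,2}=\int_I\mathcal I_{h,2}(uv)\,dx$, and $H^1_0(I)=\{v\in H^1(I):v(a)=v(b)=0\}$. *)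

theory Defs
  imports "HOL-Analysis.Analysis" "HOL-Computational_Algebra.Polynomial"
begin

definition is_mesh :: "real \<Rightarrow> real \<Rightarrow> nat \<Rightarrow> (nat \<Rightarrow> real) \<Rightarrow> bool" where
  "is_mesh a b M x \<longleftrightarrow> M \<ge> 1 \<and> x 0 = a \<and> x M = b \<and> (\<forall>i\<in>{1..M}. x (i - 1) < x i)"

definition meshsize :: "nat \<Rightarrow> (nat \<Rightarrow> real) \<Rightarrow> real" where
  "meshsize M x = Max ((\<lambda>i. x i - x (i - 1)) ` {1..M})"

definition quasi_uniform :: "real \<Rightarrow> nat \<Rightarrow> (nat \<Rightarrow> real) \<Rightarrow> bool" where
  "quasi_uniform C M x \<longleftrightarrow> (\<forall>i\<in>{1..M}. meshsize M x \<le> C * (x i - x (i - 1)))"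

definition nodes2 :: "nat \<Rightarrow> (nat \<Rightarrow> real) \<Rightarrow> real set" where
  "nodes2 M x = x ` {0..M} \<union> (\<lambda>i. (x (i - 1) + x i) / 2) ` {1..M}"

(* S^{2,0}(T_h): continuous piecewise quadratics on [a,b]; as functions real \<Rightarrow> real
   they are extended by zero outside [a,b] (convention; only values on [a,b] matter). *)
definition S20 :: "real \<Rightarrow> real \<Rightarrow> nat \<Rightarrow> (nat \<Rightarrow> real) \<Rightarrow> (real \<Rightarrow> real) set" where
  "S20 a b M x = {f. continuous_on {a..b} f \<and> (\<forall>t. t \<notin> {a..b} \<longrightarrow> f t = 0) \<and>
      (\<forall>i\<in>{1..M}. \<exists>p :: real poly. degree p \<le> 2 \<and> (\<forall>t\<in>{x (i - 1)..x i}. f t = poly p t))}"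

definition nodal_basis :: "real \<Rightarrow> real \<Rightarrow> nat \<Rightarrow> (nat \<Rightarrow> real) \<Rightarrow> real \<Rightarrow> (real \<Rightarrow> real)" where
  "nodal_basis a b M x z = (THE f. f \<in> S20 a b M x \<and>
      (\<forall>y\<in>nodes2 M x. f y = (if y = z then 1 else 0)))"

definition beta_node :: "real \<Rightarrow> real \<Rightarrow> nat \<Rightarrow> (nat \<Rightarrow> real) \<Rightarrow> real \<Rightarrow> real" where
  "beta_node a b M x z = set_lebesgue_integral lborel {a..b} (nodal_basis a b M x z)"

definition Pi_tilde :: "real \<Rightarrow> real \<Rightarrow> nat \<Rightarrow> (nat \<Rightarrow> real) \<Rightarrow> (real \<Rightarrow> real) \<Rightarrow> (real \<Rightarrow> real)" where
  "Pi_tilde a b M x v = (\<lambda>t. \<Sum>z\<in>nodes2 M x - {a, b}.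
      (set_lebesgue_integral lborel {a..b} (\<lambda>y. v y * nodal_basis a b M x z y) / beta_node a b M x z)
        * nodal_basis a b M x z t)"

(* g is a weak derivative of v on (a,b) in L^2: v(s) = v(a) + \<integral>_a^s g  (1D characterisation of H^1) *)
definition weak_deriv :: "real \<Rightarrow> real \<Rightarrow> (real \<Rightarrow> real) \<Rightarrow> (real \<Rightarrow> real) \<Rightarrow> bool" where
  "weak_deriv a b v g \<longleftrightarrow> g \<in> borel_measurable lborel \<and>
      set_integrable lborel {a..b} g \<and> set_integrable lborel {a..b} (\<lambda>t. (g t)\<^sup>2) \<and>
      (\<forall>s\<in>{a..b}. v s = v a + set_lebesgue_integral lborel {a..s} g)"

definition H1 :: "real \<Rightarrow> real \<Rightarrow> (real \<Rightarrow> real) \<Rightarrow> bool" where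
  "H1 a b v \<longleftrightarrow> (\<exists>g. weak_deriv a b v g)"

definition H10 :: "real \<Rightarrow> real \<Rightarrow> (real \<Rightarrow> real) \<Rightarrow> bool" where
  "H10 a b v \<longleftrightarrow> H1 a b v \<and> v a = 0 \<and> v b = 0"

definition H1_norm :: "real \<Rightarrow> real \<Rightarrow> (real \<Rightarrow> real) \<Rightarrow> real" where
  "H1_norm a b v = sqrt (set_lebesgue_integral lborel {a..b} (\<lambda>t. (v t)\<^sup>2)
      + set_lebesgue_integral lborel {a..b} (\<lambda>t. ((SOME g. weak_deriv a b v g) t)\<^sup>2))"

end

theory Submission
  imports Defs
begin

(* Pi~ v is the piecewise quadratic interpolant of the nodal values alpha_z = (v, phi_z) / beta_z,
   with alpha_a = alpha_b = 0. For a node z of the element I_i, phi_z is bounded by 3 and supported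
   in the patch I_(i-1) u I_i u I_(i+1), and beta_z >= h_i / 6 >= h / (6 C). Since
   |v y - v z|^2 <= |y - z| E, with E the integral of v'^2 over the patch, the coefficient error
   alpha_z - v z = (v - v z, phi_z) / beta_z is O(C sqrt (h E)). On I_i the derivative of the
   interpolant only sees the differences alpha_z - v x_(i-1), so it is O(C sqrt (h E) / h_i); by
   quasi-uniformity its square integrates to O(E) over I_i, and every element lies in at most three
   patches. The L^2 part follows from |v| <= sqrt ((b - a) |v|_1^2). Weak derivatives are unique
   almost everywhere, so the derivative chosen by H1_norm is the piecewise one. *)

section \<open>Quadratic interpolation on an interval\<close>

definition quad_interp :: "real \<Rightarrow> real \<Rightarrow> real \<Rightarrow> real \<Rightarrow> real \<Rightarrow> real \<Rightarrow> real" where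
  "quad_interp l r y0 ym y1 t = (let s = (t - l) / (r - l) in
     y0 * ((1 - s) * (1 - 2 * s)) + ym * (4 * s * (1 - s)) + y1 * (s * (2 * s - 1)))"

definition quad_interp_deriv :: "real \<Rightarrow> real \<Rightarrow> real \<Rightarrow> real \<Rightarrow> real \<Rightarrow> real \<Rightarrow> real" where
  "quad_interp_deriv l r y0 ym y1 t = (let s = (t - l) / (r - l) in
     (y0 * (4 * s - 3) + ym * (4 - 8 * s) + y1 * (4 * s - 1)) / (r - l))"

lemma quad_interp_has_real_derivative:
  "(quad_interp l r y0 ym y1 has_real_derivative quad_interp_deriv l r y0 ym y1 t) (at t)"
  unfolding quad_interp_def[abs_def] quad_interp_deriv_def Let_def divide_inverse
  by (rule derivative_eq_intros refl | simp)+ (simp add: algebra_simps)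

lemma quad_interp_has_integral:
  assumes "l < r"
  shows "(quad_interp l r y0 ym y1 has_integral (r - l) * (y0 + 4 * ym + y1) / 6) {l..r}"
proof -
  define g where "g s = y0 * ((1 - s) * (1 - 2 * s)) + ym * (4 * s * (1 - s)) + y1 * (s * (2 * s - 1))"
    for s :: real
  define G where "G s = y0 * (s - 3 * s^2 / 2 + 2 * s^3 / 3) + ym * (2 * s^2 - 4 * s^3 / 3)
    + y1 * (2 * s^3 / 3 - s^2 / 2)" for s :: real
  define F where "F t = (r - l) * G ((t - l) / (r - l))" for t
  have "(G has_real_derivative g s) (at s)" for s
    unfolding G_def g_def
    by (rule derivative_eq_intros refl | simp)+ (simp add: algebra_simps power2_eq_square)
  moreover have "((\<lambda>t. (t - l) / (r - l)) has_real_derivative 1 / (r - l)) (at t)" for t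
    using assms by (auto intro!: derivative_eq_intros)
  ultimately have "(F has_real_derivative (r - l) * (g ((t - l) / (r - l)) * (1 / (r - l)))) (at t)" for t
    unfolding F_def by (intro DERIV_cmult DERIV_chain2)
  moreover have "(r - l) * (g ((t - l) / (r - l)) * (1 / (r - l))) = quad_interp l r y0 ym y1 t" for t
    using assms by (simp add: g_def quad_interp_def Let_def)
  ultimately have "(quad_interp l r y0 ym y1 has_integral F r - F l) {l..r}"
    using assms by (intro fundamental_theorem_of_calculus)
      (auto simp: has_real_derivative_iff_has_vector_derivative has_vector_derivative_at_within)
  moreover have "F r - F l = (r - l) * (y0 + 4 * ym + y1) / 6"
    using assms by (simp add: F_def G_def field_simps less_imp_neq[symmetric])
  ultimately show ?thesis by simp
qed

lemma quad_interp_left: "l < r \<Longrightarrow> quad_interp l r y0 ym y1 l = y0"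
  and quad_interp_right: "l < r \<Longrightarrow> quad_interp l r y0 ym y1 r = y1"
  by (simp_all add: quad_interp_def)

lemma quad_interp_midpoint: "l < r \<Longrightarrow> quad_interp l r y0 ym y1 ((l + r) / 2) = ym"
proof -
  assume "l < r"
  then have "((l + r) / 2 - l) / (r - l) = 1 / 2" by (simp add: field_simps)
  then show ?thesis by (simp only: quad_interp_def Let_def) simp
qed

lemma continuous_on_quad_interp: "l < r \<Longrightarrow> continuous_on S (quad_interp l r y0 ym y1)"
  and continuous_on_quad_interp_deriv: "l < r \<Longrightarrow> continuous_on S (quad_interp_deriv l r y0 ym y1)"
  unfolding quad_interp_def[abs_def] quad_interp_deriv_def[abs_def] Let_def
  by (intro continuous_intros; simp)+

lemma abs_quad_interp_le:
  assumes "l < r" "t \<in> {l..r}"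
  shows "\<bar>quad_interp l r y0 ym y1 t\<bar> \<le> \<bar>y0\<bar> + \<bar>ym\<bar> + \<bar>y1\<bar>"
proof -
  define s where "s = (t - l) / (r - l)"
  have s: "0 \<le> s" "s \<le> 1" using assms by (auto simp: s_def field_simps)
  moreover have "s * s \<le> s" "0 \<le> (2 * s - 1) * (2 * s - 1)"
    using s by (simp_all add: mult_left_le)
  ultimately have "\<bar>(1 - s) * (1 - 2 * s)\<bar> \<le> 1" "\<bar>4 * s * (1 - s)\<bar> \<le> 1" "\<bar>s * (2 * s - 1)\<bar> \<le> 1"
    by (simp_all add: abs_le_iff algebra_simps)
  then have "\<bar>y0 * ((1 - s) * (1 - 2 * s))\<bar> + \<bar>ym * (4 * s * (1 - s))\<bar> + \<bar>y1 * (s * (2 * s - 1))\<bar>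
      \<le> \<bar>y0\<bar> + \<bar>ym\<bar> + \<bar>y1\<bar>"
    unfolding abs_mult by (intro add_mono) (auto intro: mult_left_le)
  then show ?thesis
    unfolding quad_interp_def Let_def s_def[symmetric] by linarith
qed

lemma abs_quad_interp_deriv_le:
  assumes "l < r" "t \<in> {l..r}"
  shows "\<bar>quad_interp_deriv l r y0 ym y1 t\<bar> \<le> (3 * \<bar>y0\<bar> + 4 * \<bar>ym\<bar> + 3 * \<bar>y1\<bar>) / (r - l)"
proof -
  define s where "s = (t - l) / (r - l)"
  have s: "0 \<le> s" "s \<le> 1" using assms by (auto simp: s_def field_simps)
  have "\<bar>y0 * (4 * s - 3)\<bar> \<le> \<bar>y0\<bar> * 3" "\<bar>ym * (4 - 8 * s)\<bar> \<le> \<bar>ym\<bar> * 4"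
    "\<bar>y1 * (4 * s - 1)\<bar> \<le> \<bar>y1\<bar> * 3"
    unfolding abs_mult using s by (intro mult_left_mono; auto)+
  then have "\<bar>y0 * (4 * s - 3) + ym * (4 - 8 * s) + y1 * (4 * s - 1)\<bar>
      \<le> 3 * \<bar>y0\<bar> + 4 * \<bar>ym\<bar> + 3 * \<bar>y1\<bar>"
    by linarith
  then show ?thesis
    using assms unfolding quad_interp_deriv_def Let_def s_def[symmetric]
    by (simp add: abs_div divide_right_mono)
qed

lemma quad_interp_nodal_decomp:
  "quad_interp l r y0 ym y1 t =
     y0 * quad_interp l r 1 0 0 t + ym * quad_interp l r 0 1 0 t + y1 * quad_interp l r 0 0 1 t"
  by (simp add: quad_interp_def Let_def)

lemma quad_interp_sum:
  "quad_interp l r (\<Sum>z\<in>Z. c z * f z) (\<Sum>z\<in>Z. c z * g z) (\<Sum>z\<in>Z. c z * k z) t =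
     (\<Sum>z\<in>Z. c z * quad_interp l r (f z) (g z) (k z) t)"
  by (subst (1 2) quad_interp_nodal_decomp) (simp add: distrib_left sum.distrib sum_distrib_left mult_ac)

lemma quad_interp_deriv_shift:
  "quad_interp_deriv l r y0 ym y1 t = quad_interp_deriv l r (y0 - w) (ym - w) (y1 - w) t"
  by (simp add: quad_interp_deriv_def Let_def algebra_simps)

lemma quad_interp_eq_poly: "\<exists>p :: real poly. degree p \<le> 2 \<and> quad_interp l r y0 ym y1 = poly p"
proof -
  define P where "P = [:y0, 4 * ym - 3 * y0 - y1, 2 * y0 - 4 * ym + 2 * y1:]"
  define q where "q = [:- l / (r - l), 1 / (r - l):]"
  have "quad_interp l r y0 ym y1 t = poly P (poly q t)" for t
    by (simp add: quad_interp_def P_def q_def diff_divide_distrib algebra_simps)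
  moreover have "degree (pcompose P q) \<le> 2"
    by (simp add: degree_pcompose P_def q_def)
  ultimately show ?thesis
    by (intro exI[of _ "pcompose P q"]) (auto simp: poly_pcompose)
qed

lemma poly_eq_quad_interp:
  fixes p :: "real poly"
  assumes "degree p \<le> 2" "l < r"
  shows "poly p t = quad_interp l r (poly p l) (poly p ((l + r) / 2)) (poly p r) t"
proof -
  have quadratic: "poly p y = coeff p 0 + coeff p 1 * y + coeff p 2 * y^2" for y
    using assms(1) unfolding poly_altdef
    by (subst sum.mono_neutral_left[of "{..2}"]) (auto simp: coeff_eq_0 numeral_2_eq_2)
  have exact: "poly p (l + s * (2 * d)) = poly p l * ((1 - s) * (1 - 2 * s))
      + poly p (l + d) * (4 * s * (1 - s)) + poly p (l + 2 * d) * (s * (2 * s - 1))" for s d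
    unfolding quadratic by algebra
  define s d where "s = (t - l) / (r - l)" and "d = (r - l) / 2"
  have "t = l + s * (2 * d)" "(l + r) / 2 = l + d" "r = l + 2 * d"
    using assms(2) by (simp_all add: s_def d_def field_simps)
  then have "poly p t = poly p (l + s * (2 * d))" "poly p ((l + r) / 2) = poly p (l + d)"
    "poly p r = poly p (l + 2 * d)"
    by metis+
  then show ?thesis
    unfolding quad_interp_def Let_def s_def[symmetric] exact by simp
qed

section \<open>Weak derivatives on an interval\<close>

lemma integral_square_le:
  fixes f :: "real \<Rightarrow> real"
  assumes f: "f integrable_on {p..q}" and f2: "(\<lambda>t. (f t)^2) integrable_on {p..q}" and "p \<le> q"
  shows "(integral {p..q} f)^2 \<le> (q - p) * integral {p..q} (\<lambda>t. (f t)^2)"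
proof (cases "p = q")
  case False
  with \<open>p \<le> q\<close> have L: "0 < q - p" by simp
  define m where "m = integral {p..q} f / (q - p)"
  have "((\<lambda>t. (f t)^2 - 2 * m * f t + m^2) has_integral
      integral {p..q} (\<lambda>t. (f t)^2) - 2 * m * integral {p..q} f + m^2 * (q - p)) {p..q}"
    using has_integral_const_real[of "m^2" p q] L
    by (intro has_integral_add has_integral_diff has_integral_mult_right integrable_integral f f2)
       (auto simp: mult.commute)
  moreover have "(f t)^2 - 2 * m * f t + m^2 = (f t - m)^2" for t
    by (simp add: power2_diff)
  ultimately have "0 \<le> integral {p..q} (\<lambda>t. (f t)^2) - 2 * m * integral {p..q} f + m^2 * (q - p)"
    by (metis (no_types, lifting) has_integral_nonneg zero_le_power2)
  also have "\<dots> = integral {p..q} (\<lambda>t. (f t)^2) - (integral {p..q} f)^2 / (q - p)"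
    using L unfolding m_def by (simp add: power2_eq_square)
  finally show ?thesis
    using L by (simp add: field_simps)
qed simp

lemma emeasure_density_greaterThan:
  fixes f :: "real \<Rightarrow> real"
  assumes "integrable lborel f" "\<And>t. 0 \<le> f t"
  shows "emeasure (density lborel f) {y<..} = ennreal (LINT t|lborel. indicator {y<..} t * f t)"
proof -
  have "emeasure (density lborel f) {y<..} = (\<integral>\<^sup>+ t. ennreal (indicator {y<..} t * f t) \<partial>lborel)"
    using assms by (subst emeasure_density) (auto intro!: nn_integral_cong simp: indicator_def)
  also have "\<dots> = ennreal (LINT t|lborel. indicator {y<..} t * f t)"
    using assms by (intro nn_integral_eq_integral integrable_mult_indicator[where 'b=real, simplified]) auto
  finally show ?thesis .
qed

text \<open>The densities of the positive and negative parts agree on the half-lines, which generate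
  the Borel sets.\<close>

lemma AE_zero_if_integral_greaterThan_zero:
  fixes f :: "real \<Rightarrow> real"
  assumes f: "integrable lborel f" and zero: "\<And>y. (LINT t|lborel. indicator {y<..} t * f t) = 0"
  shows "AE t in lborel. f t = 0"
proof -
  define fp fn where "fp t = max 0 (f t)" and "fn t = max 0 (- f t)" for t
  have fp: "integrable lborel fp" and fn: "integrable lborel fn"
    unfolding fp_def fn_def by (intro integrable_max integrable_zero integrable_minus f)+
  have nonneg: "0 \<le> fp t" "0 \<le> fn t" for t
    by (simp_all add: fp_def fn_def)
  have ind: "integrable lborel (\<lambda>t. indicator {y<..} t * h t)"
    if "integrable lborel h" for h :: "real \<Rightarrow> real" and y :: real
    using integrable_mult_indicator[OF _ that, of "{y<..}"] by simp
  have "(LINT t|lborel. indicator {y<..} t * fp t) - (LINT t|lborel. indicator {y<..} t * fn t)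
      = (LINT t|lborel. indicator {y<..} t * fp t - indicator {y<..} t * fn t)" for y :: real
    by (rule Bochner_Integration.integral_diff[symmetric, OF ind[OF fp] ind[OF fn]])
  also have "\<dots> y = (LINT t|lborel. indicator {y<..} t * f t)" for y :: real
    by (intro Bochner_Integration.integral_cong) (auto simp: fp_def fn_def max_def indicator_def)
  finally have "(LINT t|lborel. indicator {y<..} t * fp t) = (LINT t|lborel. indicator {y<..} t * fn t)"
    for y :: real using zero by simp
  then have "density lborel fp = density lborel fn"
    by (intro measure_eqI_lessThan)
       (simp_all add: emeasure_density_greaterThan[OF fp nonneg(1)] emeasure_density_greaterThan[OF fn nonneg(2)])
  then have "AE t in lborel. ennreal (fp t) = ennreal (fn t)"
    using fp fn by (intro sigma_finite_measure.density_unique[OF lborel.sigma_finite_measure_axioms]) auto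
  then show ?thesis
    by eventually_elim (simp add: fp_def fn_def max_def split: if_splits)
qed

lemma integral_greaterThan_eq_0_if_integral_Icc_eq_0:
  fixes d :: "real \<Rightarrow> real"
  assumes d: "integrable lborel d" and outside: "\<And>t. t \<notin> {a..b} \<Longrightarrow> d t = 0"
    and d_Icc: "\<And>s. s \<in> {a..b} \<Longrightarrow> (LINT t|lborel. indicator {a..s} t * d t) = 0"
  shows "(LINT t|lborel. indicator {y<..} t * d t) = 0"
proof (cases "a \<le> y \<and> y < b")
  case True
  have "indicator {y<..} t * d t = indicator {a..b} t * d t - indicator {a..y} t * d t" for t
    using True outside[of t] by (auto simp: indicator_def)
  then show ?thesis
    using True d_Icc[of b] d_Icc[of y] d
    by (simp add: Bochner_Integration.integral_diff integrable_mult_indicator[where 'b=real, simplified])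
next
  case False
  then have "(\<lambda>t. indicator {y<..} t * d t)
      = (if y < a then (\<lambda>t. indicator {a..b} t * d t) else (\<lambda>_. 0))"
    using outside by (auto simp: indicator_def fun_eq_iff)
  moreover have "(\<lambda>t. indicator {a..b} t * d t) = (\<lambda>_. 0)" if "\<not> a \<le> b"
    using that outside by (auto simp: fun_eq_iff)
  ultimately show ?thesis
    using d_Icc[of b] by (cases "a \<le> b") auto
qed

lemma weak_deriv_unique:
  assumes "weak_deriv a b v g1" "weak_deriv a b v g2"
  shows "AE t in lborel. t \<in> {a..b} \<longrightarrow> g1 t = g2 t"
proof -
  define d where "d t = indicator {a..b} t * (g1 t - g2 t)" for t
  have g: "set_integrable lborel {a..b} g1" "set_integrable lborel {a..b} g2"
    using assms unfolding weak_deriv_def by blast+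
  then have d: "integrable lborel d"
    unfolding d_def set_integrable_def by (simp add: right_diff_distrib)
  have d_Icc: "(LINT t|lborel. indicator {a..s} t * d t) = 0" if "s \<in> {a..b}" for s
  proof -
    have "v s = v a + set_lebesgue_integral lborel {a..s} g1"
      "v s = v a + set_lebesgue_integral lborel {a..s} g2"
      using assms that unfolding weak_deriv_def by blast+
    then have "set_lebesgue_integral lborel {a..s} g1 = set_lebesgue_integral lborel {a..s} g2"
      by simp
    moreover have "set_integrable lborel {a..s} g1" "set_integrable lborel {a..s} g2"
      using g that by (auto intro: set_integrable_subset)
    ultimately have "set_lebesgue_integral lborel {a..s} (\<lambda>t. g1 t - g2 t) = 0"
      by simp
    moreover have "(\<lambda>t. indicator {a..s} t * d t) = (\<lambda>t. indicator {a..s} t * (g1 t - g2 t))"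
      using that by (auto simp: d_def indicator_def)
    ultimately show ?thesis
      by (simp add: set_lebesgue_integral_def)
  qed
  have "d t = 0" if "t \<notin> {a..b}" for t
    using that by (simp add: d_def)
  then have "AE t in lborel. d t = 0"
    using d d_Icc by (intro AE_zero_if_integral_greaterThan_zero integral_greaterThan_eq_0_if_integral_Icc_eq_0)
  then show ?thesis
    by eventually_elim (auto simp: d_def)
qed

lemma H1_norm_eq:
  assumes "weak_deriv a b v g"
  shows "H1_norm a b v = sqrt (set_lebesgue_integral lborel {a..b} (\<lambda>t. (v t)^2)
    + set_lebesgue_integral lborel {a..b} (\<lambda>t. (g t)^2))"
proof -
  define g' where "g' = (SOME g. weak_deriv a b v g)"
  have g': "weak_deriv a b v g'"
    unfolding g'_def using assms by (rule someI[of "weak_deriv a b v"])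
  have "g' \<in> borel_measurable lborel" "g \<in> borel_measurable lborel"
    using assms g' unfolding weak_deriv_def by blast+
  moreover have "AE t in lborel. t \<in> {a..b} \<longrightarrow> (g' t)^2 = (g t)^2"
    using weak_deriv_unique[OF g' assms] by eventually_elim simp
  ultimately have "set_lebesgue_integral lborel {a..b} (\<lambda>t. (g' t)^2)
      = set_lebesgue_integral lborel {a..b} (\<lambda>t. (g t)^2)"
    by (intro set_lebesgue_integral_cong_AE) auto
  then show ?thesis
    by (simp add: H1_norm_def g'_def)
qed

lemma weak_deriv_integrable_on:
  assumes "weak_deriv a b v g" "{p..q} \<subseteq> {a..b}"
  shows "g integrable_on {p..q}" "(\<lambda>t. (g t)^2) integrable_on {p..q}"
  using assms set_borel_integral_eq_integral(1) integrable_on_subinterval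
  unfolding weak_deriv_def by blast+

lemma weak_deriv_diff:
  assumes g: "weak_deriv a b v g" and "p \<le> q" "p \<in> {a..b}" "q \<in> {a..b}"
  shows "v q - v p = integral {p..q} g"
proof -
  have "set_lebesgue_integral lborel {a..s} g = integral {a..s} g" if "s \<in> {a..b}" for s
    using g that unfolding weak_deriv_def
    by (intro set_borel_integral_eq_integral(2)) (auto intro: set_integrable_subset)
  moreover have "integral {a..p} g + integral {p..q} g = integral {a..q} g"
    using assms weak_deriv_integrable_on(1)[OF g, of a q] by (intro Henstock_Kurzweil_Integration.integral_combine) auto
  ultimately show ?thesis
    using assms unfolding weak_deriv_def by (metis add_diff_cancel_left add_diff_cancel_left')
qed

lemma weak_deriv_continuous_on:
  assumes g: "weak_deriv a b v g"
  shows "continuous_on {a..b} v"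
proof -
  have "continuous_on {a..b} (\<lambda>s. v a + integral {a..s} g)"
    using weak_deriv_integrable_on(1)[OF g order_refl]
    by (intro continuous_intros indefinite_integral_continuous_1)
  then show ?thesis
    by (rule continuous_on_eq) (use weak_deriv_diff[OF g] in force)
qed

lemma weak_deriv_diff_sq_le:
  assumes g: "weak_deriv a b v g" and "p \<in> {c..d}" "q \<in> {c..d}" "{c..d} \<subseteq> {a..b}"
  shows "(v q - v p)^2 \<le> \<bar>q - p\<bar> * integral {c..d} (\<lambda>t. (g t)^2)"
proof -
  have *: "(v q - v p)^2 \<le> (q - p) * integral {c..d} (\<lambda>t. (g t)^2)"
    if "p \<le> q" "p \<in> {c..d}" "q \<in> {c..d}" for p q
  proof -
    have "(v q - v p)^2 = (integral {p..q} g)^2"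
      using that assms by (subst weak_deriv_diff[OF g]) auto
    also have "\<dots> \<le> (q - p) * integral {p..q} (\<lambda>t. (g t)^2)"
      using that assms by (intro integral_square_le weak_deriv_integrable_on[OF g]) auto
    also have "\<dots> \<le> (q - p) * integral {c..d} (\<lambda>t. (g t)^2)"
      using that assms
      by (intro mult_left_mono integral_subset_le weak_deriv_integrable_on[OF g]) auto
    finally show ?thesis .
  qed
  show ?thesis
    using *[of p q] *[of q p] assms by (cases "p \<le> q") (auto simp: power2_commute)
qed

section \<open>Piecewise quadratic interpolation on a mesh\<close>

locale mesh =
  fixes a b :: real and M :: nat and x :: "nat \<Rightarrow> real"
  assumes mesh: "is_mesh a b M x"
begin

lemma M_ge_1: "1 \<le> M" and x_0: "x 0 = a" and x_M: "x M = b"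
  and x_step: "i \<in> {1..M} \<Longrightarrow> x (i - 1) < x i"
  using mesh by (auto simp: is_mesh_def)

lemma x_strict_mono: "i < j \<Longrightarrow> j \<le> M \<Longrightarrow> x i < x j"
proof (induction j)
  case (Suc j)
  then have "x j < x (Suc j)" using x_step[of "Suc j"] by auto
  with Suc show ?case by (cases "i = j") auto
qed simp

lemma x_mono: "i \<le> j \<Longrightarrow> j \<le> M \<Longrightarrow> x i \<le> x j"
  using x_strict_mono[of i j] by (cases "i = j") auto

lemma x_in_Icc: "i \<le> M \<Longrightarrow> x i \<in> {a..b}"
  using x_mono[of 0 i] x_mono[of i M] x_0 x_M by auto

lemma a_less_b: "a < b"
  using x_strict_mono[of 0 M] M_ge_1 x_0 x_M by simp

lemma element_subset: "i \<in> {1..M} \<Longrightarrow> {x (i - 1)..x i} \<subseteq> {a..b}"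
  using x_in_Icc[of i] x_in_Icc[of "i - 1"] by auto

lemma element_length_le_meshsize: "i \<in> {1..M} \<Longrightarrow> x i - x (i - 1) \<le> meshsize M x"
  unfolding meshsize_def by (rule Max_ge) auto

lemma meshsize_le: "meshsize M x \<le> b - a"
proof -
  have "meshsize M x \<in> (\<lambda>i. x i - x (i - 1)) ` {1..M}"
    unfolding meshsize_def by (rule Max_in) (use M_ge_1 in auto)
  then obtain i where "i \<in> {1..M}" "meshsize M x = x i - x (i - 1)" by blast
  then show ?thesis using element_subset[of i] x_step[of i] by auto
qed

lemma meshsize_pos: "0 < meshsize M x"
  using element_length_le_meshsize[of 1] x_step[of 1] M_ge_1 by auto

definition mid :: "nat \<Rightarrow> real" where
  "mid i = (x (i - 1) + x i) / 2"

definition elem_nodes :: "nat \<Rightarrow> real set" where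
  "elem_nodes i = {x (i - 1), mid i, x i}"

lemma elem_nodes_subset: "i \<in> {1..M} \<Longrightarrow> elem_nodes i \<subseteq> {x (i - 1)..x i}"
  using x_step[of i] by (auto simp: elem_nodes_def mid_def)

lemma nodes2_eq_UN_elem_nodes: "nodes2 M x = (\<Union>i\<in>{1..M}. elem_nodes i)"
proof -
  have "x j \<in> (\<Union>i\<in>{1..M}. elem_nodes i)" if "j \<le> M" for j
  proof (cases "j = 0")
    case True
    then show ?thesis using M_ge_1 by (auto simp: elem_nodes_def intro!: bexI[of _ 1])
  next
    case False
    then show ?thesis using that by (auto simp: elem_nodes_def intro!: bexI[of _ j])
  qed
  then show ?thesis
    by (auto simp: nodes2_def elem_nodes_def mid_def)
qed

lemma finite_nodes2: "finite (nodes2 M x)"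
  by (simp add: nodes2_def)

text \<open>At an interior mesh point this is the element to the left.\<close>

definition elem :: "real \<Rightarrow> nat" where
  "elem t = (LEAST i. 1 \<le> i \<and> t \<le> x i)"

lemma elem_spec:
  assumes "t \<in> {a..b}"
  shows "elem t \<in> {1..M}" "t \<in> {x (elem t - 1)..x (elem t)}"
proof -
  have "1 \<le> M \<and> t \<le> x M" using assms M_ge_1 x_M by auto
  then have P: "1 \<le> elem t \<and> t \<le> x (elem t)" and "elem t \<le> M"
    unfolding elem_def by (fact LeastI, fact Least_le)
  then show "elem t \<in> {1..M}" by auto
  show "t \<in> {x (elem t - 1)..x (elem t)}"
  proof (cases "elem t = 1")
    case False
    then have "\<not> (1 \<le> elem t - 1 \<and> t \<le> x (elem t - 1))"
      using not_less_Least[of "elem t - 1" "\<lambda>i. 1 \<le> i \<and> t \<le> x i"] P unfolding elem_def by fastforce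
    then show ?thesis using P False by auto
  qed (use P assms x_0 in auto)
qed

lemma elem_le: "i \<in> {1..M} \<Longrightarrow> t \<le> x i \<Longrightarrow> elem t \<le> i"
  unfolding elem_def by (rule Least_le) auto

lemma Icc_eq_UN_elements: "{a..b} = (\<Union>i\<in>{1..M}. {x (i - 1)..x i})"
  using elem_spec element_subset by blast


definition local_interp :: "nat \<Rightarrow> (real \<Rightarrow> real) \<Rightarrow> real \<Rightarrow> real" where
  "local_interp i d = quad_interp (x (i - 1)) (x i) (d (x (i - 1))) (d (mid i)) (d (x i))"

definition interp :: "(real \<Rightarrow> real) \<Rightarrow> real \<Rightarrow> real" where
  "interp d t = (if t \<in> {a..b} then local_interp (elem t) d t else 0)"

lemma local_interp_nodes:
  assumes "i \<in> {1..M}"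
  shows "local_interp i d (x (i - 1)) = d (x (i - 1))" "local_interp i d (mid i) = d (mid i)"
    "local_interp i d (x i) = d (x i)"
  using x_step[OF assms]
  by (simp_all add: local_interp_def quad_interp_left quad_interp_right quad_interp_midpoint mid_def)

lemma interp_eq_local_interp:
  assumes i: "i \<in> {1..M}" and t: "t \<in> {x (i - 1)..x i}"
  shows "interp d t = local_interp i d t"
proof -
  have t_ab: "t \<in> {a..b}" using element_subset[OF i] t by auto
  define j where "j = elem t"
  have j: "j \<in> {1..M}" "t \<in> {x (j - 1)..x j}" "j \<le> i"
    using elem_spec[OF t_ab] elem_le[OF i] t by (auto simp: j_def)
  show ?thesis
  proof (cases "j = i")
    case False
    then have "x j \<le> x (i - 1)" using j i by (intro x_mono) auto
    then have "t = x j" "t = x (i - 1)" using t j by auto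
    then show ?thesis
      using t_ab local_interp_nodes(3)[OF j(1)] local_interp_nodes(1)[OF i]
      by (simp add: interp_def j_def)
  qed (use t_ab in \<open>simp add: interp_def j_def\<close>)
qed

lemma interp_nodes:
  assumes "y \<in> nodes2 M x"
  shows "interp d y = d y"
proof -
  obtain i where i: "i \<in> {1..M}" "y \<in> elem_nodes i"
    using assms by (auto simp: nodes2_eq_UN_elem_nodes)
  then have "interp d y = local_interp i d y"
    using elem_nodes_subset[OF i(1)] by (intro interp_eq_local_interp) auto
  also have "\<dots> = d y"
    using i local_interp_nodes[OF i(1)] by (auto simp: elem_nodes_def)
  finally show ?thesis .
qed

lemma interp_cong:
  assumes "\<And>y. y \<in> nodes2 M x \<Longrightarrow> d y = d' y"
  shows "interp d = interp d'"
proof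
  fix t
  show "interp d t = interp d' t"
  proof (cases "t \<in> {a..b}")
    case True
    then have "elem_nodes (elem t) \<subseteq> nodes2 M x"
      using elem_spec(1) nodes2_eq_UN_elem_nodes by auto
    then show ?thesis
      using assms True by (simp add: interp_def local_interp_def elem_nodes_def)
  qed (auto simp: interp_def)
qed

lemma continuous_on_interp: "continuous_on {a..b} (interp d)"
proof -
  have "continuous_on {x (i - 1)..x i} (interp d)" if i: "i \<in> {1..M}" for i
    using continuous_on_quad_interp[OF x_step[OF i]]
    by (rule continuous_on_eq) (simp add: interp_eq_local_interp[OF i] local_interp_def)
  then show ?thesis
    by (subst Icc_eq_UN_elements) (rule continuous_on_closed_Union; auto)
qed

lemma interp_in_S20: "interp d \<in> S20 a b M x"
proof -
  have "\<exists>p :: real poly. degree p \<le> 2 \<and> (\<forall>t\<in>{x (i - 1)..x i}. interp d t = poly p t)"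
    if i: "i \<in> {1..M}" for i
    using quad_interp_eq_poly interp_eq_local_interp[OF i] unfolding local_interp_def by metis
  then show ?thesis
    unfolding S20_def using continuous_on_interp by (auto simp: interp_def)
qed

lemma interp_S20_eq: "f \<in> S20 a b M x \<Longrightarrow> interp f = f"
proof
  fix t assume f: "f \<in> S20 a b M x"
  show "interp f t = f t"
  proof (cases "t \<in> {a..b}")
    case True
    define i where "i = elem t"
    have i: "i \<in> {1..M}" "t \<in> {x (i - 1)..x i}" using elem_spec[OF True] by (auto simp: i_def)
    then obtain p :: "real poly" where p: "degree p \<le> 2" "\<forall>s\<in>{x (i - 1)..x i}. f s = poly p s"
      using f unfolding S20_def by blast
    moreover have "mid i \<in> {x (i - 1)..x i}" using elem_nodes_subset[OF i(1)] by (auto simp: elem_nodes_def)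
    ultimately show ?thesis
      using poly_eq_quad_interp[OF p(1) x_step[OF i(1)], of t] i x_step[OF i(1)]
      by (simp add: interp_eq_local_interp local_interp_def mid_def)
  qed (use f in \<open>auto simp: S20_def interp_def\<close>)
qed

lemma nodal_basis_eq_interp: "nodal_basis a b M x z = interp (\<lambda>y. of_bool (y = z))"
  unfolding nodal_basis_def
proof (rule the_equality)
  fix f assume f: "f \<in> S20 a b M x \<and> (\<forall>y\<in>nodes2 M x. f y = (if y = z then 1 else 0))"
  then have "f = interp f" using interp_S20_eq by simp
  also have "\<dots> = interp (\<lambda>y. of_bool (y = z))" using f by (intro interp_cong) auto
  finally show "f = interp (\<lambda>y. of_bool (y = z))" .
qed (use interp_in_S20 interp_nodes in auto)

lemma interp_sum: "interp (\<lambda>y. \<Sum>z\<in>Z. c z * d z y) t = (\<Sum>z\<in>Z. c z * interp (d z) t)"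
  by (cases "t \<in> {a..b}") (auto simp: interp_def local_interp_def quad_interp_sum)


definition Pi_coeff :: "(real \<Rightarrow> real) \<Rightarrow> real \<Rightarrow> real" where
  "Pi_coeff v z = (if z \<in> nodes2 M x - {a, b}
     then set_lebesgue_integral lborel {a..b} (\<lambda>y. v y * nodal_basis a b M x z y) / beta_node a b M x z
     else 0)"

lemma Pi_tilde_eq_interp: "Pi_tilde a b M x v = interp (Pi_coeff v)"
proof
  fix t
  have "(\<Sum>z\<in>nodes2 M x - {a, b}. Pi_coeff v z * of_bool (y = z))
      = (\<Sum>z\<in>nodes2 M x - {a, b}. if z = y then Pi_coeff v z else 0)" for y
    by (intro sum.cong) auto
  also have "\<dots> y = Pi_coeff v y" for y
    using finite_nodes2 by (simp add: sum.delta Pi_coeff_def)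
  finally have coeff: "(\<Sum>z\<in>nodes2 M x - {a, b}. Pi_coeff v z * of_bool (y = z)) = Pi_coeff v y" for y .
  have "Pi_tilde a b M x v t = (\<Sum>z\<in>nodes2 M x - {a, b}. Pi_coeff v z * interp (\<lambda>y. of_bool (y = z)) t)"
    unfolding Pi_tilde_def by (intro sum.cong) (auto simp: Pi_coeff_def nodal_basis_eq_interp)
  also have "\<dots> = interp (\<lambda>y. \<Sum>z\<in>nodes2 M x - {a, b}. Pi_coeff v z * of_bool (y = z)) t"
    by (rule interp_sum[symmetric])
  finally show "Pi_tilde a b M x v t = interp (Pi_coeff v) t"
    unfolding coeff .
qed

lemma integral_split_elements:
  fixes f :: "real \<Rightarrow> real"
  assumes "f integrable_on {a..b}"
  shows "integral {a..b} f = (\<Sum>i\<in>{1..M}. integral {x (i - 1)..x i} f)"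
proof -
  have "integral {x 0..x k} f = (\<Sum>i\<in>{1..k}. integral {x (i - 1)..x i} f)" if "k \<le> M" for k
    using that
  proof (induction k)
    case (Suc k)
    have "{x 0..x (Suc k)} \<subseteq> {a..b}" using x_in_Icc[of 0] x_in_Icc[of "Suc k"] Suc.prems by auto
    then have "integral {x 0..x k} f + integral {x k..x (Suc k)} f = integral {x 0..x (Suc k)} f"
      using assms x_mono[of 0 k] x_mono[of k "Suc k"] Suc.prems
      by (intro Henstock_Kurzweil_Integration.integral_combine integrable_on_subinterval[OF assms]) auto
    then show ?case using Suc by simp
  qed simp
  from this[OF order_refl] show ?thesis using x_0 x_M by simp
qed

lemma continuous_on_nodal_basis: "continuous_on {a..b} (nodal_basis a b M x z)"
  by (simp add: nodal_basis_eq_interp continuous_on_interp)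

lemma beta_node_eq:
  "beta_node a b M x z = (\<Sum>i\<in>{1..M}. (x i - x (i - 1)) *
     (of_bool (x (i - 1) = z) + 4 * of_bool (mid i = z) + of_bool (x i = z)) / 6)"
proof -
  have "beta_node a b M x z = integral {a..b} (nodal_basis a b M x z)"
    unfolding beta_node_def
    by (intro set_borel_integral_eq_integral(2) borel_integrable_atLeastAtMost' continuous_on_nodal_basis)
  also have "\<dots> = (\<Sum>i\<in>{1..M}. integral {x (i - 1)..x i} (nodal_basis a b M x z))"
    by (intro integral_split_elements integrable_continuous_interval continuous_on_nodal_basis)
  also have "\<dots> = (\<Sum>i\<in>{1..M}. (x i - x (i - 1)) *
     (of_bool (x (i - 1) = z) + 4 * of_bool (mid i = z) + of_bool (x i = z)) / 6)"
  proof (intro sum.cong refl integral_unique)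
    fix i assume i: "i \<in> {1..M}"
    show "(nodal_basis a b M x z has_integral (x i - x (i - 1)) *
       (of_bool (x (i - 1) = z) + 4 * of_bool (mid i = z) + of_bool (x i = z)) / 6) {x (i - 1)..x i}"
      using quad_interp_has_integral[OF x_step[OF i]]
      by (rule has_integral_eq[rotated])
         (simp add: nodal_basis_eq_interp interp_eq_local_interp[OF i] local_interp_def)
  qed
  finally show ?thesis .
qed

lemma beta_node_ge:
  assumes i: "i \<in> {1..M}" and z: "z \<in> elem_nodes i"
  shows "(x i - x (i - 1)) / 6 \<le> beta_node a b M x z"
proof -
  have "(x i - x (i - 1)) / 6 \<le> (x i - x (i - 1)) *
      (of_bool (x (i - 1) = z) + 4 * of_bool (mid i = z) + of_bool (x i = z)) / 6"
    using x_step[OF i] z by (auto simp: elem_nodes_def mid_def)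
  also have "\<dots> \<le> beta_node a b M x z"
  proof -
    have "0 \<le> (x j - x (j - 1)) * (of_bool (x (j - 1) = z) + 4 * of_bool (mid j = z) + of_bool (x j = z)) / 6"
      if "j \<in> {1..M}" for j
      using x_step[OF that] by (intro divide_nonneg_pos mult_nonneg_nonneg add_nonneg_nonneg) auto
    then show ?thesis
      unfolding beta_node_eq by (intro member_le_sum i) auto
  qed
  finally show ?thesis .
qed

lemma abs_nodal_basis_le: "\<bar>nodal_basis a b M x z t\<bar> \<le> 3"
proof (cases "t \<in> {a..b}")
  case True
  then have "\<bar>local_interp (elem t) (\<lambda>y. of_bool (y = z)) t\<bar> \<le> 1 + 1 + 1"
    unfolding local_interp_def using elem_spec[OF True]
    by (intro order.trans[OF abs_quad_interp_le] x_step add_mono) auto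
  then show ?thesis
    using True by (simp add: nodal_basis_eq_interp interp_def)
qed (auto simp: nodal_basis_eq_interp interp_def)

definition patch :: "nat \<Rightarrow> real set" where
  "patch i = {x (i - 2)..x (min M (i + 1))}"

lemma element_subset_patch: "i \<in> {1..M} \<Longrightarrow> {x (i - 1)..x i} \<subseteq> patch i"
  unfolding patch_def using x_mono[of "i - 2" "i - 1"] x_mono[of i "min M (i + 1)"] by auto

lemma patch_subset: "i \<in> {1..M} \<Longrightarrow> patch i \<subseteq> {a..b}"
  unfolding patch_def using x_in_Icc[of "i - 2"] x_in_Icc[of "min M (i + 1)"] by auto

lemma x_diff_le: "k \<le> j \<Longrightarrow> j \<le> M \<Longrightarrow> x j - x k \<le> real (j - k) * meshsize M x"
proof (induction j)
  case (Suc j)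
  show ?case
  proof (cases "k = Suc j")
    case False
    then have "x j - x k \<le> real (j - k) * meshsize M x" "k \<le> j" using Suc by auto
    moreover have "x (Suc j) - x j \<le> meshsize M x"
      using element_length_le_meshsize[of "Suc j"] Suc.prems by simp
    ultimately show ?thesis by (simp add: Suc_diff_le algebra_simps)
  qed simp
qed simp

lemma patch_length_le:
  assumes "i \<in> {1..M}"
  shows "x (min M (i + 1)) - x (i - 2) \<le> 3 * meshsize M x"
proof -
  have "x (min M (i + 1)) - x (i - 2) \<le> real (min M (i + 1) - (i - 2)) * meshsize M x"
    by (rule x_diff_le) (use assms in auto)
  also have "\<dots> \<le> 3 * meshsize M x"
    using meshsize_pos by (intro mult_right_mono) auto
  finally show ?thesis .
qed

lemma nodal_basis_support:
  assumes i: "i \<in> {1..M}" and z: "z \<in> elem_nodes i" and t: "t \<in> {a..b}"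
    and nz: "nodal_basis a b M x z t \<noteq> 0"
  shows "t \<in> patch i"
proof -
  define j where "j = elem t"
  have j: "j \<in> {1..M}" "t \<in> {x (j - 1)..x j}" using elem_spec[OF t] by (auto simp: j_def)
  have "local_interp j (\<lambda>y. of_bool (y = z)) t \<noteq> 0"
    using nz t by (simp add: nodal_basis_eq_interp interp_def j_def)
  then have "z \<in> elem_nodes j"
    by (auto simp: local_interp_def quad_interp_def elem_nodes_def)
  then have "z \<in> {x (j - 1)..x j}" "z \<in> {x (i - 1)..x i}"
    using elem_nodes_subset i j z by blast+
  then have "\<not> x i < x (j - 1)" "\<not> x j < x (i - 1)"
    by auto
  then have "j \<le> i + 1" "i \<le> j + 1"
    using x_strict_mono[of i "j - 1"] x_strict_mono[of j "i - 1"] i j by force+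
  then have "x (i - 2) \<le> x (j - 1)" "x j \<le> x (min M (i + 1))"
    using i j by (auto intro!: x_mono)
  then show ?thesis using j by (auto simp: patch_def)
qed


definition local_interp_deriv :: "nat \<Rightarrow> (real \<Rightarrow> real) \<Rightarrow> real \<Rightarrow> real" where
  "local_interp_deriv i d = quad_interp_deriv (x (i - 1)) (x i) (d (x (i - 1))) (d (mid i)) (d (x i))"

text \<open>Summing over the open elements makes integrability immediate; the value 0 at the mesh points
  does not matter.\<close>

definition interp_deriv :: "(real \<Rightarrow> real) \<Rightarrow> real \<Rightarrow> real" where
  "interp_deriv d t = (\<Sum>i\<in>{1..M}. indicator {x (i - 1)<..<x i} t * local_interp_deriv i d t)"

lemma sum_open_elements:
  assumes i: "i \<in> {1..M}" and t: "t \<in> {x (i - 1)<..<x i}"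
  shows "(\<Sum>j\<in>{1..M}. indicator {x (j - 1)<..<x j} t * F j t) = (F i t :: real)"
proof -
  have "t \<notin> {x (j - 1)<..<x j}" if j: "j \<in> {1..M}" "j \<noteq> i" for j
  proof (cases "i < j")
    case True
    then have "x i \<le> x (j - 1)" using j by (intro x_mono) auto
    then show ?thesis using t by auto
  next
    case False
    then have "x j \<le> x (i - 1)" using i j by (intro x_mono) auto
    then show ?thesis using t by auto
  qed
  then show ?thesis
    using i t by (subst sum.remove[of _ i]) (auto intro!: sum.neutral)
qed

lemma interp_deriv_eq:
  "i \<in> {1..M} \<Longrightarrow> t \<in> {x (i - 1)<..<x i} \<Longrightarrow> interp_deriv d t = local_interp_deriv i d t"
  unfolding interp_deriv_def by (rule sum_open_elements)

lemma interp_deriv_x: "k \<le> M \<Longrightarrow> interp_deriv d (x k) = 0"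
proof -
  assume k: "k \<le> M"
  have "x k \<notin> {x (j - 1)<..<x j}" if j: "j \<in> {1..M}" for j
  proof (cases "k < j")
    case True
    then have "x k \<le> x (j - 1)" using j by (intro x_mono) auto
    then show ?thesis by auto
  next
    case False
    then have "x j \<le> x k" using k by (intro x_mono) auto
    then show ?thesis by auto
  qed
  then show ?thesis
    unfolding interp_deriv_def by (intro sum.neutral) auto
qed

lemma interp_deriv_square:
  "(interp_deriv d t)^2 = (\<Sum>i\<in>{1..M}. indicator {x (i - 1)<..<x i} t * (local_interp_deriv i d t)^2)"
proof (cases "\<exists>i\<in>{1..M}. t \<in> {x (i - 1)<..<x i}")
  case True
  then obtain i where i: "i \<in> {1..M}" "t \<in> {x (i - 1)<..<x i}" by blast
  then show ?thesis
    using interp_deriv_eq[OF i] sum_open_elements[OF i, of "\<lambda>j t. (local_interp_deriv j d t)^2"] by simp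
qed (auto simp: interp_deriv_def)

lemma integrable_open_element:
  fixes F :: "real \<Rightarrow> real"
  assumes "continuous_on UNIV F"
  shows "integrable lborel (\<lambda>t. indicator {x (i - 1)<..<x i} t * F t)"
proof -
  have "set_integrable lborel {x (i - 1)..x i} F"
    by (intro borel_integrable_atLeastAtMost' continuous_on_subset[OF assms]) auto
  then have "set_integrable lborel {x (i - 1)<..<x i} F"
    by (rule set_integrable_subset) auto
  then show ?thesis by (simp add: set_integrable_def)
qed

lemma integrable_interp_deriv: "integrable lborel (interp_deriv d)"
  unfolding interp_deriv_def[abs_def] local_interp_deriv_def
  by (intro Bochner_Integration.integrable_sum integrable_open_element
      continuous_on_quad_interp_deriv x_step) simp

lemma integrable_interp_deriv_square: "integrable lborel (\<lambda>t. (interp_deriv d t)^2)"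
  unfolding interp_deriv_square local_interp_deriv_def
  by (intro Bochner_Integration.integrable_sum integrable_open_element continuous_intros
      continuous_on_quad_interp_deriv x_step) simp

lemma integrable_on_interp_deriv_square: "(\<lambda>t. (interp_deriv d t)^2) integrable_on {p..q}"
  using integrable_mult_indicator[OF _ integrable_interp_deriv_square, of "{p..q}" d]
  by (intro set_borel_integral_eq_integral(1)) (simp add: set_integrable_def)

lemma interp_has_real_derivative:
  assumes i: "i \<in> {1..M}" and t: "t \<in> {x (i - 1)<..<x i}"
  shows "(interp d has_real_derivative interp_deriv d t) (at t)"
proof -
  have "(local_interp i d has_real_derivative local_interp_deriv i d t) (at t)"
    unfolding local_interp_def local_interp_deriv_def by (rule quad_interp_has_real_derivative)
  then have "(interp d has_real_derivative local_interp_deriv i d t) (at t)"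
    by (rule has_field_derivative_transform_within_open[where S = "{x (i - 1)<..<x i}"])
       (use t interp_eq_local_interp[OF i] in auto)
  then show ?thesis
    using interp_deriv_eq[OF i t] by simp
qed

lemma weak_deriv_interp: "weak_deriv a b (interp d) (interp_deriv d)"
  unfolding weak_deriv_def
proof (intro conjI ballI)
  show "interp_deriv d \<in> borel_measurable lborel"
    using integrable_interp_deriv by auto
  show "set_integrable lborel {a..b} (interp_deriv d)"
    "set_integrable lborel {a..b} (\<lambda>t. (interp_deriv d t)^2)"
    unfolding set_integrable_def
    by (intro integrable_mult_indicator integrable_interp_deriv integrable_interp_deriv_square; simp)+
  fix s assume s: "s \<in> {a..b}"
  have "(interp_deriv d has_integral interp d s - interp d a) {a..s}"
  proof (rule fundamental_theorem_of_calculus_interior_strong[where S = "x ` {0..M}"])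
    show "continuous_on {a..s} (interp d)"
      using s by (intro continuous_on_subset[OF continuous_on_interp]) auto
    fix t assume t: "t \<in> {a<..<s} - x ` {0..M}"
    then have "t \<in> {a..b}" using s by auto
    then have "elem t \<in> {1..M}" "t \<in> {x (elem t - 1)..x (elem t)}"
      by (fact elem_spec)+
    moreover have "t \<noteq> x (elem t - 1)" "t \<noteq> x (elem t)"
      using t \<open>elem t \<in> {1..M}\<close> by force+
    ultimately have "elem t \<in> {1..M}" "t \<in> {x (elem t - 1)<..<x (elem t)}"
      by auto
    then show "(interp d has_vector_derivative interp_deriv d t) (at t)"
      using interp_has_real_derivative by (simp add: has_real_derivative_iff_has_vector_derivative)
  qed (use s in auto)
  moreover have "set_integrable lborel {a..s} (interp_deriv d)"
    unfolding set_integrable_def by (intro integrable_mult_indicator integrable_interp_deriv) simp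
  ultimately show "interp d s = interp d a + set_lebesgue_integral lborel {a..s} (interp_deriv d)"
    by (simp add: set_borel_integral_eq_integral(2) integral_unique)
qed

end

section \<open>Stability of the quasi-interpolant\<close>

locale quasi_uniform_mesh = mesh +
  fixes C :: real
  assumes quasi_uniform: "quasi_uniform C M x"
begin

lemma meshsize_le_C: "i \<in> {1..M} \<Longrightarrow> meshsize M x \<le> C * (x i - x (i - 1))"
  using quasi_uniform by (auto simp: quasi_uniform_def)

lemma C_pos: "0 < C"
proof -
  have "0 < C * (x 1 - x 0)"
    using meshsize_le_C[of 1] meshsize_pos M_ge_1 by fastforce
  then show ?thesis
    using x_step[of 1] M_ge_1 by (simp add: zero_less_mult_iff)
qed

lemma beta_node_ge_meshsize:
  assumes "i \<in> {1..M}" "z \<in> elem_nodes i"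
  shows "meshsize M x / (6 * C) \<le> beta_node a b M x z"
proof -
  have "meshsize M x \<le> C * (x i - x (i - 1))"
    using assms(1) by (rule meshsize_le_C)
  also have "\<dots> \<le> C * (6 * beta_node a b M x z)"
    using beta_node_ge[OF assms] C_pos by (intro mult_left_mono) auto
  finally show ?thesis
    using C_pos by (simp add: pos_divide_le_eq mult_ac)
qed

end

locale H10_on_mesh = quasi_uniform_mesh +
  fixes v g :: "real \<Rightarrow> real"
  assumes weak_deriv: "weak_deriv a b v g" and v_a: "v a = 0" and v_b: "v b = 0"
begin

definition energy :: "real set \<Rightarrow> real" where
  "energy S = integral S (\<lambda>t. (g t)^2)"

lemma energy_nonneg: "{c..d} \<subseteq> {a..b} \<Longrightarrow> 0 \<le> energy {c..d}"
  unfolding energy_def by (intro integral_nonneg weak_deriv_integrable_on[OF weak_deriv]) auto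

lemma energy_patch_nonneg: "i \<in> {1..M} \<Longrightarrow> 0 \<le> energy (patch i)"
  using patch_subset energy_nonneg by (simp add: patch_def)

lemma energy_mono: "{c..d} \<subseteq> {a..b} \<Longrightarrow> energy {c..d} \<le> energy {a..b}"
  unfolding energy_def by (intro integral_subset_le weak_deriv_integrable_on[OF weak_deriv]) auto

lemma v_diff_sq_le:
  "p \<in> {c..d} \<Longrightarrow> q \<in> {c..d} \<Longrightarrow> {c..d} \<subseteq> {a..b} \<Longrightarrow>
    (v q - v p)^2 \<le> \<bar>q - p\<bar> * energy {c..d}"
  unfolding energy_def by (rule weak_deriv_diff_sq_le[OF weak_deriv])

lemma abs_v_le: "p \<in> {a..b} \<Longrightarrow> \<bar>v p\<bar> \<le> sqrt ((b - a) * energy {a..b})"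
proof -
  assume p: "p \<in> {a..b}"
  have "(v p - v a)^2 \<le> \<bar>p - a\<bar> * energy {a..b}"
    using p by (intro v_diff_sq_le) auto
  also have "\<dots> \<le> (b - a) * energy {a..b}"
    using p energy_nonneg[of a b] by (intro mult_right_mono) auto
  finally show ?thesis
    using v_a by (simp add: real_le_rsqrt)
qed

definition element_energy :: "nat \<Rightarrow> real" where
  "element_energy j = (if j \<in> {1..M} then energy {x (j - 1)..x j} else 0)"

lemma element_energy_nonneg: "0 \<le> element_energy j"
  unfolding element_energy_def using energy_nonneg element_subset by auto

lemma energy_split:
  "p \<le> q \<Longrightarrow> q \<le> r \<Longrightarrow> {p..r} \<subseteq> {a..b} \<Longrightarrow>
    energy {p..r} = energy {p..q} + energy {q..r}"
  unfolding energy_def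
  by (intro Henstock_Kurzweil_Integration.integral_combine[symmetric] weak_deriv_integrable_on[OF weak_deriv])

lemma energy_patch_eq:
  assumes i: "i \<in> {1..M}"
  shows "energy (patch i) = element_energy (i - 1) + element_energy i + element_energy (i + 1)"
proof -
  have le: "x (i - 2) \<le> x (i - 1)" "x (i - 1) \<le> x i" "x i \<le> x (min M (i + 1))"
    using i by (auto intro!: x_mono)
  have sub: "{x (i - 2)..x (min M (i + 1))} \<subseteq> {a..b}"
    using patch_subset[OF i] by (simp add: patch_def)
  have "energy (patch i) = energy {x (i - 2)..x (i - 1)} + energy {x (i - 1)..x (min M (i + 1))}"
    unfolding patch_def using le sub by (intro energy_split) auto
  also have "energy {x (i - 1)..x (min M (i + 1))} = energy {x (i - 1)..x i} + energy {x i..x (min M (i + 1))}"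
    using le sub by (intro energy_split) auto
  finally have "energy (patch i) = energy {x (i - 2)..x (i - 1)} + energy {x (i - 1)..x i}
      + energy {x i..x (min M (i + 1))}" by simp
  moreover have "energy {x (i - 2)..x (i - 1)} = element_energy (i - 1)"
  proof (cases "i = 1")
    case False
    then have "i - 1 \<in> {1..M}" "i - 2 = i - 1 - 1" using i by auto
    then show ?thesis by (simp add: element_energy_def)
  qed (simp add: element_energy_def energy_def)
  moreover have "energy {x i..x (min M (i + 1))} = element_energy (i + 1)"
  proof (cases "i = M")
    case False
    then have "i + 1 \<in> {1..M}" "min M (i + 1) = i + 1" using i by auto
    then show ?thesis by (simp add: element_energy_def)
  qed (simp add: element_energy_def energy_def)
  ultimately show ?thesis
    using i by (simp add: element_energy_def)
qed

lemma sum_energy_patch_le: "(\<Sum>i\<in>{1..M}. energy (patch i)) \<le> 3 * energy {a..b}"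
proof -
  have total: "(\<Sum>j\<in>{0..M + 1}. element_energy j) = energy {a..b}"
  proof -
    have "(\<Sum>j\<in>{0..M + 1}. element_energy j) = (\<Sum>j\<in>{1..M}. energy {x (j - 1)..x j})"
      by (subst sum.mono_neutral_right[of "{0..M + 1}" "{1..M}"]) (auto simp: element_energy_def)
    also have "\<dots> = energy {a..b}"
      unfolding energy_def
      by (rule integral_split_elements[symmetric]) (rule weak_deriv_integrable_on(2)[OF weak_deriv order_refl])
    finally show ?thesis .
  qed
  have shifted: "(\<Sum>i\<in>{1..M}. element_energy (f i)) \<le> energy {a..b}"
    if "inj_on f {1..M}" "f ` {1..M} \<subseteq> {0..M + 1}" for f
  proof -
    have "(\<Sum>i\<in>{1..M}. element_energy (f i)) = (\<Sum>j\<in>f ` {1..M}. element_energy j)"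
      using that by (simp add: sum.reindex)
    also have "\<dots> \<le> (\<Sum>j\<in>{0..M + 1}. element_energy j)"
      using that by (intro sum_mono2) (auto simp: element_energy_nonneg)
    finally show ?thesis using total by simp
  qed
  have "(\<Sum>i\<in>{1..M}. energy (patch i)) = (\<Sum>i\<in>{1..M}. element_energy (i - 1))
      + (\<Sum>i\<in>{1..M}. element_energy i) + (\<Sum>i\<in>{1..M}. element_energy (i + 1))"
    by (simp add: energy_patch_eq sum.distrib)
  also have "\<dots> \<le> energy {a..b} + energy {a..b} + energy {a..b}"
    by (intro add_mono shifted) (auto simp: inj_on_def)
  finally show ?thesis by simp
qed


lemma continuous_on_v: "continuous_on {a..b} v"
  by (rule weak_deriv_continuous_on[OF weak_deriv])

lemma abs_v_diff_nodal_basis_le: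
  assumes i: "i \<in> {1..M}" and z: "z \<in> elem_nodes i" and y: "y \<in> {a..b}"
  shows "\<bar>(v y - v z) * nodal_basis a b M x z y\<bar>
    \<le> (if y \<in> patch i then 3 * sqrt (3 * meshsize M x * energy (patch i)) else 0)"
proof (cases "y \<in> patch i")
  case True
  define c d where "c = x (i - 2)" and "d = x (min M (i + 1))"
  have cd: "patch i = {c..d}" "{c..d} \<subseteq> {a..b}" "d - c \<le> 3 * meshsize M x"
    using patch_subset[OF i] patch_length_le[OF i] by (simp_all add: patch_def c_def d_def)
  have z_patch: "z \<in> {c..d}"
    using elem_nodes_subset[OF i] element_subset_patch[OF i] z cd(1) by blast
  have "(v y - v z)^2 \<le> \<bar>y - z\<bar> * energy {c..d}"
    using z_patch True cd by (intro v_diff_sq_le) auto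
  also have "\<dots> \<le> 3 * meshsize M x * energy {c..d}"
    using True z_patch cd energy_nonneg[OF cd(2)] by (intro mult_right_mono) auto
  finally have "\<bar>v y - v z\<bar> \<le> sqrt (3 * meshsize M x * energy (patch i))"
    unfolding cd(1) by (simp add: real_le_rsqrt)
  then have "\<bar>v y - v z\<bar> * \<bar>nodal_basis a b M x z y\<bar> \<le> sqrt (3 * meshsize M x * energy (patch i)) * 3"
    using abs_nodal_basis_le energy_patch_nonneg[OF i] meshsize_pos by (intro mult_mono) auto
  then show ?thesis using True by (simp add: abs_mult)
qed (use nodal_basis_support[OF i z y] in auto)

lemma abs_integral_nodal_basis_le:
  assumes i: "i \<in> {1..M}" and z: "z \<in> elem_nodes i"
  shows "\<bar>integral {a..b} (\<lambda>y. (v y - v z) * nodal_basis a b M x z y)\<bar>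
    \<le> 9 * meshsize M x * sqrt (3 * meshsize M x * energy (patch i))"
proof -
  define S where "S = sqrt (3 * meshsize M x * energy (patch i))"
  have S_nonneg: "0 \<le> S"
    using energy_patch_nonneg[OF i] meshsize_pos by (simp add: S_def)
  have patch: "patch i \<subseteq> {a..b}" "patch i = {x (i - 2)..x (min M (i + 1))}"
    using patch_subset[OF i] by (simp_all add: patch_def)
  have "(\<lambda>y. (v y - v z) * nodal_basis a b M x z y) integrable_on {a..b}"
    by (intro integrable_continuous_interval continuous_intros continuous_on_v continuous_on_nodal_basis)
  moreover have "(\<lambda>y. if y \<in> patch i then 3 * S else 0) integrable_on {a..b}"
    unfolding integrable_restrict_Int Int_absorb2[OF patch(1)] unfolding patch(2)
    by (rule integrable_const_ivl)
  ultimately have "\<bar>integral {a..b} (\<lambda>y. (v y - v z) * nodal_basis a b M x z y)\<bar>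
      \<le> integral {a..b} (\<lambda>y. if y \<in> patch i then 3 * S else 0)"
    using abs_v_diff_nodal_basis_le[OF i z] unfolding S_def
    by (intro integral_norm_bound_integral[where 'a=real, unfolded real_norm_def])
  also have "\<dots> = 3 * S * (x (min M (i + 1)) - x (i - 2))"
    unfolding integral_restrict_Int Int_absorb2[OF patch(1)] unfolding patch(2)
    using element_subset_patch[OF i] x_step[OF i] patch(2) by simp
  also have "\<dots> \<le> 3 * S * (3 * meshsize M x)"
    using patch_length_le[OF i] S_nonneg by (intro mult_left_mono) auto
  finally show ?thesis by (simp add: S_def mult_ac)
qed


lemma Pi_coeff_error:
  assumes i: "i \<in> {1..M}" and z: "z \<in> elem_nodes i"
  shows "\<bar>Pi_coeff v z - v z\<bar> \<le> 54 * C * sqrt (3 * meshsize M x * energy (patch i))"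
proof (cases "z \<in> {a, b}")
  case True
  then show ?thesis
    using v_a v_b C_pos meshsize_pos energy_patch_nonneg[OF i] by (auto simp: Pi_coeff_def)
next
  case False
  define \<phi> where "\<phi> = nodal_basis a b M x z"
  define \<beta> where "\<beta> = beta_node a b M x z"
  have "0 < meshsize M x / (6 * C)"
    using meshsize_pos C_pos by simp
  then have \<beta>: "meshsize M x / (6 * C) \<le> \<beta>" "0 < \<beta>"
    using beta_node_ge_meshsize[OF i z] unfolding \<beta>_def by linarith+
  have \<beta>_eq: "\<beta> = integral {a..b} \<phi>"
    unfolding \<beta>_def \<phi>_def beta_node_def
    by (intro set_borel_integral_eq_integral(2) borel_integrable_atLeastAtMost' continuous_on_nodal_basis)
  have "set_lebesgue_integral lborel {a..b} (\<lambda>y. v y * \<phi> y) = integral {a..b} (\<lambda>y. v y * \<phi> y)"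
    unfolding \<phi>_def by (intro set_borel_integral_eq_integral(2) borel_integrable_atLeastAtMost'
        continuous_intros continuous_on_v continuous_on_nodal_basis)
  also have "\<dots> = integral {a..b} (\<lambda>y. (v y - v z) * \<phi> y) + v z * \<beta>"
    unfolding \<beta>_eq \<phi>_def
    by (subst integral_mult_right[symmetric], subst integral_add[symmetric])
       (auto simp: algebra_simps intro!: integrable_continuous_interval continuous_intros
         continuous_on_v continuous_on_nodal_basis)
  moreover have "z \<in> nodes2 M x - {a, b}"
    using False i z unfolding nodes2_eq_UN_elem_nodes by blast
  ultimately have "Pi_coeff v z - v z = integral {a..b} (\<lambda>y. (v y - v z) * \<phi> y) / \<beta>"
    using \<beta>(2)
    by (simp add: Pi_coeff_def \<phi>_def \<beta>_def[symmetric] field_simps)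
  also have "\<bar>\<dots>\<bar> \<le> 9 * meshsize M x * sqrt (3 * meshsize M x * energy (patch i)) / \<beta>"
    unfolding abs_divide \<phi>_def using \<beta>(2) abs_integral_nodal_basis_le[OF i z]
    by (simp add: divide_right_mono)
  also have "\<dots> \<le> 9 * meshsize M x * sqrt (3 * meshsize M x * energy (patch i)) / (meshsize M x / (6 * C))"
    using \<beta> meshsize_pos C_pos energy_patch_nonneg[OF i] by (intro divide_left_mono) auto
  also have "\<dots> = 54 * C * sqrt (3 * meshsize M x * energy (patch i))"
    using meshsize_pos C_pos by (simp add: field_simps)
  finally show ?thesis .
qed

lemma Pi_coeff_deviation:
  assumes i: "i \<in> {1..M}" and z: "z \<in> elem_nodes i"
  shows "\<bar>Pi_coeff v z - v (x (i - 1))\<bar> \<le> (54 * C + 1) * sqrt (3 * meshsize M x * energy (patch i))"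
proof -
  have z_elem: "z \<in> {x (i - 1)..x i}" and "x (i - 1) \<in> {x (i - 1)..x i}"
    using elem_nodes_subset[OF i] z x_step[OF i] by auto
  then have "(v z - v (x (i - 1)))^2 \<le> \<bar>z - x (i - 1)\<bar> * energy (patch i)"
    using element_subset_patch[OF i] patch_subset[OF i] unfolding patch_def
    by (intro v_diff_sq_le) auto
  also have "\<dots> \<le> 3 * meshsize M x * energy (patch i)"
    using z_elem element_length_le_meshsize[OF i] meshsize_pos energy_patch_nonneg[OF i]
    by (intro mult_right_mono) auto
  finally have "\<bar>v z - v (x (i - 1))\<bar> \<le> sqrt (3 * meshsize M x * energy (patch i))"
    by (simp add: real_le_rsqrt)
  then show ?thesis
    using Pi_coeff_error[OF i z] by (simp add: algebra_simps)
qed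

lemma abs_Pi_coeff_le:
  assumes i: "i \<in> {1..M}" and z: "z \<in> elem_nodes i"
  shows "\<bar>Pi_coeff v z\<bar> \<le> (54 * C + 1) * sqrt (3 * (b - a) * energy {a..b})"
proof -
  define Q where "Q = sqrt (3 * (b - a) * energy {a..b})"
  have "z \<in> {a..b}"
    using elem_nodes_subset[OF i] element_subset[OF i] z by blast
  then have "\<bar>v z\<bar> \<le> sqrt ((b - a) * energy {a..b})"
    by (rule abs_v_le)
  also have "\<dots> \<le> Q"
    unfolding Q_def using a_less_b energy_nonneg[of a b] by (intro real_sqrt_le_mono mult_right_mono) auto
  finally have "\<bar>v z\<bar> \<le> Q" .
  moreover have "sqrt (3 * meshsize M x * energy (patch i)) \<le> Q"
    using meshsize_le meshsize_pos energy_patch_nonneg[OF i] patch_subset[OF i] unfolding Q_def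
    by (auto simp: patch_def intro!: mult_mono energy_mono)
  then have "54 * C * sqrt (3 * meshsize M x * energy (patch i)) \<le> 54 * C * Q"
    using C_pos by (intro mult_left_mono) auto
  moreover have "\<bar>Pi_coeff v z\<bar> \<le> \<bar>Pi_coeff v z - v z\<bar> + \<bar>v z\<bar>"
    using abs_triangle_ineq[of "Pi_coeff v z - v z" "v z"] by simp
  ultimately have "\<bar>Pi_coeff v z\<bar> \<le> 54 * C * Q + Q"
    using Pi_coeff_error[OF i z] by linarith
  then show ?thesis
    unfolding Q_def by (simp add: distrib_right)
qed

lemma integral_Pi_tilde_square_le:
  "integral {a..b} (\<lambda>t. (Pi_tilde a b M x v t)^2) \<le> 27 * (54 * C + 1)^2 * (b - a)^2 * energy {a..b}"
proof -
  define R where "R = (54 * C + 1) * sqrt (3 * (b - a) * energy {a..b})"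
  have "\<bar>Pi_tilde a b M x v t\<bar> \<le> 3 * R" if t: "t \<in> {a..b}" for t
  proof -
    have i: "elem t \<in> {1..M}" "t \<in> {x (elem t - 1)..x (elem t)}"
      using elem_spec[OF t] by auto
    have "\<bar>interp (Pi_coeff v) t\<bar> \<le> \<bar>Pi_coeff v (x (elem t - 1))\<bar> + \<bar>Pi_coeff v (mid (elem t))\<bar>
        + \<bar>Pi_coeff v (x (elem t))\<bar>"
      unfolding interp_eq_local_interp[OF i] local_interp_def by (rule abs_quad_interp_le[OF x_step[OF i(1)] i(2)])
    also have "\<dots> \<le> R + R + R"
      unfolding R_def by (intro add_mono abs_Pi_coeff_le[OF i(1)]) (auto simp: elem_nodes_def)
    finally show ?thesis by (simp add: Pi_tilde_eq_interp)
  qed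
  then have "(Pi_tilde a b M x v t)^2 \<le> (3 * R)^2" if "t \<in> {a..b}" for t
    using that by (metis abs_ge_zero power2_abs power_mono)
  then have "integral {a..b} (\<lambda>t. (Pi_tilde a b M x v t)^2) \<le> integral {a..b} (\<lambda>t. (3 * R)^2)"
    by (intro integral_le integrable_continuous_interval continuous_intros)
       (auto simp: Pi_tilde_eq_interp continuous_on_interp)
  also have "\<dots> = 9 * R^2 * (b - a)"
    using a_less_b by (simp add: power_mult_distrib)
  also have "R^2 = (54 * C + 1)^2 * (3 * (b - a) * energy {a..b})"
    using a_less_b energy_nonneg[of a b] by (simp add: R_def power_mult_distrib)
  also have "9 * ((54 * C + 1)^2 * (3 * (b - a) * energy {a..b})) * (b - a)
      = 27 * (54 * C + 1)^2 * (b - a)^2 * energy {a..b}"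
    by (simp add: power2_eq_square)
  finally show ?thesis .
qed

lemma abs_interp_deriv_Pi_coeff_le:
  assumes i: "i \<in> {1..M}" and t: "t \<in> {x (i - 1)..x i}"
  shows "\<bar>interp_deriv (Pi_coeff v) t\<bar>
    \<le> 10 * (54 * C + 1) * sqrt (3 * meshsize M x * energy (patch i)) / (x i - x (i - 1))"
proof (cases "t \<in> {x (i - 1)<..<x i}")
  case True
  define w where "w = v (x (i - 1))"
  define D where "D = (54 * C + 1) * sqrt (3 * meshsize M x * energy (patch i))"
  have "\<bar>Pi_coeff v z - w\<bar> \<le> D" if "z \<in> elem_nodes i" for z
    unfolding w_def D_def using Pi_coeff_deviation[OF i that] .
  then have bounds: "\<bar>Pi_coeff v (x (i - 1)) - w\<bar> \<le> D" "\<bar>Pi_coeff v (mid i) - w\<bar> \<le> D"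
    "\<bar>Pi_coeff v (x i) - w\<bar> \<le> D"
    by (auto simp: elem_nodes_def)
  have "interp_deriv (Pi_coeff v) t = quad_interp_deriv (x (i - 1)) (x i)
      (Pi_coeff v (x (i - 1)) - w) (Pi_coeff v (mid i) - w) (Pi_coeff v (x i) - w) t"
    unfolding interp_deriv_eq[OF i True] local_interp_deriv_def by (rule quad_interp_deriv_shift)
  also have "\<bar>\<dots>\<bar> \<le> (3 * \<bar>Pi_coeff v (x (i - 1)) - w\<bar> + 4 * \<bar>Pi_coeff v (mid i) - w\<bar>
      + 3 * \<bar>Pi_coeff v (x i) - w\<bar>) / (x i - x (i - 1))"
    by (rule abs_quad_interp_deriv_le[OF x_step[OF i] t])
  also have "\<dots> \<le> (3 * D + 4 * D + 3 * D) / (x i - x (i - 1))"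
    using bounds x_step[OF i] by (intro divide_right_mono) auto
  finally show ?thesis
    by (simp add: D_def algebra_simps)
next
  case False
  then have "t = x (i - 1) \<or> t = x i" using t by auto
  then have "interp_deriv (Pi_coeff v) t = 0"
    using interp_deriv_x[of "i - 1"] interp_deriv_x[of i] i by auto
  moreover have "0 \<le> 10 * (54 * C + 1) * sqrt (3 * meshsize M x * energy (patch i)) / (x i - x (i - 1))"
    using x_step[OF i] C_pos meshsize_pos energy_patch_nonneg[OF i] by simp
  ultimately show ?thesis
    by simp
qed


lemma integral_interp_deriv_Pi_coeff_square_element_le:
  assumes i: "i \<in> {1..M}"
  shows "integral {x (i - 1)..x i} (\<lambda>t. (interp_deriv (Pi_coeff v) t)^2)
    \<le> 300 * C * (54 * C + 1)^2 * energy (patch i)"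
proof -
  define hi where "hi = x i - x (i - 1)"
  define K where "K = 10 * (54 * C + 1) * sqrt (3 * meshsize M x * energy (patch i)) / hi"
  have hi: "0 < hi" using x_step[OF i] by (simp add: hi_def)
  have "(interp_deriv (Pi_coeff v) t)^2 \<le> K^2" if "t \<in> {x (i - 1)..x i}" for t
    using abs_interp_deriv_Pi_coeff_le[OF i that] unfolding K_def hi_def
    by (metis abs_ge_zero power2_abs power_mono)
  then have "integral {x (i - 1)..x i} (\<lambda>t. (interp_deriv (Pi_coeff v) t)^2)
      \<le> integral {x (i - 1)..x i} (\<lambda>t. K^2)"
    by (intro integral_le integrable_on_interp_deriv_square) auto
  also have "\<dots> = K^2 * hi"
    using hi by (simp add: hi_def)
  also have "\<dots> = 300 * (54 * C + 1)^2 * energy (patch i) * (meshsize M x / hi)"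
    using hi meshsize_pos energy_patch_nonneg[OF i]
    by (simp add: K_def power_divide power_mult_distrib field_simps power2_eq_square)
  also have "\<dots> \<le> 300 * (54 * C + 1)^2 * energy (patch i) * C"
    using meshsize_le_C[OF i] hi energy_patch_nonneg[OF i]
    by (intro mult_left_mono) (auto simp: hi_def divide_le_eq)
  finally show ?thesis by (simp add: algebra_simps)
qed

lemma integral_interp_deriv_Pi_coeff_square_le:
  "integral {a..b} (\<lambda>t. (interp_deriv (Pi_coeff v) t)^2) \<le> 900 * C * (54 * C + 1)^2 * energy {a..b}"
proof -
  have "integral {a..b} (\<lambda>t. (interp_deriv (Pi_coeff v) t)^2)
      = (\<Sum>i\<in>{1..M}. integral {x (i - 1)..x i} (\<lambda>t. (interp_deriv (Pi_coeff v) t)^2))"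
    by (intro integral_split_elements integrable_on_interp_deriv_square)
  also have "\<dots> \<le> (\<Sum>i\<in>{1..M}. 300 * C * (54 * C + 1)^2 * energy (patch i))"
    by (intro sum_mono integral_interp_deriv_Pi_coeff_square_element_le)
  also have "\<dots> = 300 * C * (54 * C + 1)^2 * (\<Sum>i\<in>{1..M}. energy (patch i))"
    by (simp add: sum_distrib_left)
  also have "\<dots> \<le> 300 * C * (54 * C + 1)^2 * (3 * energy {a..b})"
    using C_pos by (intro mult_left_mono sum_energy_patch_le) auto
  finally show ?thesis by simp
qed

lemma H1_norm_Pi_tilde_le:
  "H1_norm a b (Pi_tilde a b M x v) \<le> (54 * C + 1) * sqrt (27 * (b - a)^2 + 900 * C) * H1_norm a b v"
proof -
  define K where "K = (54 * C + 1)^2 * (27 * (b - a)^2 + 900 * C)"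
  have K: "0 \<le> K" "sqrt K = (54 * C + 1) * sqrt (27 * (b - a)^2 + 900 * C)"
    using C_pos by (simp_all add: K_def real_sqrt_mult)
  have "set_integrable lborel {a..b} (\<lambda>t. (interp (Pi_coeff v) t)^2)"
    by (intro borel_integrable_atLeastAtMost' continuous_intros continuous_on_interp)
  moreover have "set_integrable lborel {a..b} (\<lambda>t. (interp_deriv (Pi_coeff v) t)^2)"
    using integrable_mult_indicator[OF _ integrable_interp_deriv_square, of "{a..b}" "Pi_coeff v"]
    by (simp add: set_integrable_def)
  ultimately have "H1_norm a b (Pi_tilde a b M x v) = sqrt (integral {a..b} (\<lambda>t. (Pi_tilde a b M x v t)^2)
      + integral {a..b} (\<lambda>t. (interp_deriv (Pi_coeff v) t)^2))"
    unfolding H1_norm_eq[OF weak_deriv_interp] Pi_tilde_eq_interp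
    by (simp add: set_borel_integral_eq_integral(2))
  also have "\<dots> \<le> sqrt (K * energy {a..b})"
    using integral_Pi_tilde_square_le integral_interp_deriv_Pi_coeff_square_le
    by (simp add: K_def algebra_simps)
  also have "\<dots> \<le> sqrt (K * (set_lebesgue_integral lborel {a..b} (\<lambda>t. (v t)^2) + energy {a..b}))"
  proof -
    have "0 \<le> set_lebesgue_integral lborel {a..b} (\<lambda>t. (v t)^2)"
      unfolding set_lebesgue_integral_def by (rule integral_nonneg_AE) (simp add: indicator_def)
    then show ?thesis
      using K(1) by (intro real_sqrt_le_mono mult_left_mono) auto
  qed
  also have "\<dots> = sqrt K * H1_norm a b v"
    using weak_deriv unfolding H1_norm_eq[OF weak_deriv] energy_def weak_deriv_def
    by (simp add: set_borel_integral_eq_integral(2) real_sqrt_mult)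
  finally show ?thesis
    unfolding K(2) .
qed

end

theorem mainTheorem7:
  fixes a b C :: real
  assumes "a < b"
  shows "\<exists>c>0. \<forall>M x. is_mesh a b M x \<and> quasi_uniform C M x \<longrightarrow>
           (\<forall>v. H10 a b v \<longrightarrow> H1_norm a b (Pi_tilde a b M x v) \<le> c * H1_norm a b v)"
proof -
  define c where "c = (54 * \<bar>C\<bar> + 1) * sqrt (27 * (b - a)^2 + 900 * \<bar>C\<bar>)"
  have "0 < c"
    using assms by (simp add: c_def add_pos_nonneg)
  moreover have "H1_norm a b (Pi_tilde a b M x v) \<le> c * H1_norm a b v"
    if "is_mesh a b M x \<and> quasi_uniform C M x" and "H10 a b v" for M x v
  proof -
    obtain g where "weak_deriv a b v g" "v a = 0" "v b = 0"
      using \<open>H10 a b v\<close> by (auto simp: H10_def H1_def)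
    then interpret H10_on_mesh a b M x C v g
      using that by unfold_locales auto
    show ?thesis
      using H1_norm_Pi_tilde_le C_pos by (simp add: c_def)
  qed
  ultimately show ?thesis by blast
qed

end
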